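(* Let $\pi=(\pi_n^{n+1}\colon(X_{n+1},f_{n+1})\to(X_n,f_n))_{n\ge1}$ be an inverse sequence of equivariant maps, let $(X,f)=\lim_\pi(X_n,f_n)$, and suppose $f_n$ is chain transitive for every $n\ge1$ (so $f$ is chain transitive). Let $\mathcal{D}_\pi=\{(D_n)_{n\ge1}\in\prod_{n\ge1}\mathcal{D}(f_n):\pi_n^{n+1}(D_{n+1})\subset D_n\ \forall n\ge1\}$ and, for $D_\ast=(D_n)_{n\ge1}\in\mathcal{D}_\pi$, $[D_\ast]=\{x=(x_n)_{n\ge1}\in X:x_n\in D_n\ \forall n\ge1\}$. If $\pi$ satisfies MLC(1), then $\mathcal{D}(f)=\{[D_\ast]:D_\ast\in\mathcal{D}_\pi\}$.
   Context: Each $X_n$ is a compact metric space, $f_n$ a continuous self-map, $\pi_n^{n+1}\colon X_{n+1}\to X_n$ continuous with $f_n\circ\pi_n^{n+1}=\pi_n^{n+1}\circ f_{n+1}$. $X=\{(x_n)\in\prod_n X_n:\pi_n^{n+1}(x_{n+1})=x_n\ \forall n\}$ with the product topology and $f((x_n))=(f_n(x_n))$. $\pi$ satisfies MLC(1) if $\pi_n^{n+1}(X_{n+1})=\pi_n^{n+1}(\pi_{n+1}^{n+2}(X_{n+2}))$ for all $n$. For a continuous map $g$ of a compact metric space $(Y,d)$: a $\delta$-chain is a finite sequence $(y_i)_{i=0}^k$, $k>0$, with $d(g(y_i),y_{i+1})\le\delta$, a $\delta$-cycle of length $k$ if $y_0=y_k$; $g$ is chain transitive if any two points are joined by a $\delta$-chain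 for every $\delta>0$. For chain transitive $g$ and $\delta>0$, $m(g,\delta)$ is the gcd of the lengths of $\delta$-cycles; $y\sim_{g,\delta}z$ iff there is a $\delta$-chain from $y$ to $z$ of length divisible by $m(g,\delta)$; $y\sim_g z$ iff $y\sim_{g,\delta}z$ for all $\delta>0$; $\mathcal{D}(g)$ is the set of equivalence classes of $\sim_g$. *)

theory Defs
  imports "HOL-Analysis.Analysis"
begin

definition is_chain ::
  "('a \<Rightarrow> 'a \<Rightarrow> real) \<Rightarrow> 'a set \<Rightarrow> ('a \<Rightarrow> 'a) \<Rightarrow> real \<Rightarrow> nat \<Rightarrow> 'a \<Rightarrow> 'a \<Rightarrow> bool" where
  "is_chain d Y g \<delta> k y z \<longleftrightarrow> 0 < k \<and>
     (\<exists>c :: nat \<Rightarrow> 'a. c 0 = y \<and> c k = z \<and> (\<forall>i\<le>k. c i \<in> Y) \<and>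
        (\<forall>i<k. d (g (c i)) (c (Suc i)) \<le> \<delta>))"

definition chain_transitive ::
  "('a \<Rightarrow> 'a \<Rightarrow> real) \<Rightarrow> 'a set \<Rightarrow> ('a \<Rightarrow> 'a) \<Rightarrow> bool" where
  "chain_transitive d Y g \<longleftrightarrow>
     (\<forall>y\<in>Y. \<forall>z\<in>Y. \<forall>\<delta>>0. \<exists>k. is_chain d Y g \<delta> k y z)"

definition cycle_gcd ::
  "('a \<Rightarrow> 'a \<Rightarrow> real) \<Rightarrow> 'a set \<Rightarrow> ('a \<Rightarrow> 'a) \<Rightarrow> real \<Rightarrow> nat" where
  "cycle_gcd d Y g \<delta> = Gcd {k. \<exists>y\<in>Y. is_chain d Y g \<delta> k y y}"

definition rel_delta ::
  "('a \<Rightarrow> 'a \<Rightarrow> real) \<Rightarrow> 'a set \<Rightarrow> ('a \<Rightarrow> 'a) \<Rightarrow> real \<Rightarrow> 'a \<Rightarrow> 'a \<Rightarrow> bool" where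
  "rel_delta d Y g \<delta> y z \<longleftrightarrow>
     (\<exists>k. cycle_gcd d Y g \<delta> dvd k \<and> is_chain d Y g \<delta> k y z)"

definition chain_rel ::
  "('a \<Rightarrow> 'a \<Rightarrow> real) \<Rightarrow> 'a set \<Rightarrow> ('a \<Rightarrow> 'a) \<Rightarrow> ('a \<times> 'a) set" where
  "chain_rel d Y g = {(y, z). y \<in> Y \<and> z \<in> Y \<and> (\<forall>\<delta>>0. rel_delta d Y g \<delta> y z)}"

definition Dcl ::
  "('a \<Rightarrow> 'a \<Rightarrow> real) \<Rightarrow> 'a set \<Rightarrow> ('a \<Rightarrow> 'a) \<Rightarrow> 'a set set" where
  "Dcl d Y g = Y // chain_rel d Y g"

definition invlim :: "(nat \<Rightarrow> 'a set) \<Rightarrow> (nat \<Rightarrow> 'a \<Rightarrow> 'a) \<Rightarrow> (nat \<Rightarrow> 'a) set" where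
  "invlim X \<pi> = {x. \<forall>n. x n \<in> X n \<and> \<pi> n (x (Suc n)) = x n}"

definition limmap :: "(nat \<Rightarrow> 'a \<Rightarrow> 'a) \<Rightarrow> (nat \<Rightarrow> 'a) \<Rightarrow> (nat \<Rightarrow> 'a)" where
  "limmap f x = (\<lambda>n. f n (x n))"

definition invlim_dist :: "(nat \<Rightarrow> 'a::metric_space) \<Rightarrow> (nat \<Rightarrow> 'a) \<Rightarrow> real" where
  "invlim_dist x y = (\<Sum>n. (1/2) ^ n * min 1 (dist (x n) (y n)))"

definition MLC1 :: "(nat \<Rightarrow> 'a set) \<Rightarrow> (nat \<Rightarrow> 'a \<Rightarrow> 'a) \<Rightarrow> bool" where
  "MLC1 X \<pi> \<longleftrightarrow> (\<forall>n. \<pi> n ` X (Suc n) = \<pi> n ` (\<pi> (Suc n) ` X (Suc (Suc n))))"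

definition Dpi :: "(nat \<Rightarrow> 'a::metric_space set) \<Rightarrow> (nat \<Rightarrow> 'a \<Rightarrow> 'a) \<Rightarrow> (nat \<Rightarrow> 'a \<Rightarrow> 'a)
    \<Rightarrow> (nat \<Rightarrow> 'a set) set" where
  "Dpi X f \<pi> = {D. (\<forall>n. D n \<in> Dcl dist (X n) (f n)) \<and> (\<forall>n. \<pi> n ` D (Suc n) \<subseteq> D n)}"

definition bracket :: "(nat \<Rightarrow> 'a set) \<Rightarrow> (nat \<Rightarrow> 'a \<Rightarrow> 'a) \<Rightarrow> (nat \<Rightarrow> 'a set) \<Rightarrow> (nat \<Rightarrow> 'a) set" where
  "bracket X \<pi> D = {x \<in> invlim X \<pi>. \<forall>n. x n \<in> D n}"

end

theory Submission
  imports Defs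
begin

text \<open>Coordinate projections of the inverse limit and the bonding maps are uniformly continuous
  and equivariant, so they carry the relation \<open>\<sim>\<close> (with its cycle gcds) forward; hence the
  class of \<open>x\<close> lies in \<open>[(class of x\<^sub>n)\<^sub>n]\<close> and the coordinate classes form an
  element of \<open>\<D>\<^sub>\<pi>\<close>. Conversely, closeness in the limit is controlled by a single
  coordinate \<open>N\<close>, and MLC(1) lets every point of \<open>\<pi>\<^sub>N(X\<^sub>N\<^sub>+\<^sub>1)\<close> be lifted
  to the limit; lifting a fine chain of level \<open>N + 1\<close> point by point gives a \<open>\<delta>\<close>-chain in
  the limit of the same length, and cycles lift likewise, so coordinatewise related points are
  related. Finally, the members of any \<open>D\<^sub>* \<in> \<D>\<^sub>\<pi>\<close> are closed classes, so
  \<open>[D\<^sub>*]\<close> is the inverse limit of nonempty compacta, hence nonempty and equal to the class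
  of any of its points.\<close>

lemma is_chain_in: "is_chain d Y g \<delta> k a b \<Longrightarrow> a \<in> Y \<and> b \<in> Y"
  unfolding is_chain_def by (metis le0 order_refl)

lemma is_chain_append:
  assumes "is_chain d Y g \<delta> k a b" and "is_chain d Y g \<delta> j b c"
  shows "is_chain d Y g \<delta> (k + j) a c"
proof -
  obtain c1 where "0 < k" and c1: "c1 0 = a" "c1 k = b" "\<forall>i\<le>k. c1 i \<in> Y"
      "\<forall>i<k. d (g (c1 i)) (c1 (Suc i)) \<le> \<delta>"
    using assms(1) unfolding is_chain_def by blast
  obtain c2 where "0 < j" and c2: "c2 0 = b" "c2 j = c" "\<forall>i\<le>j. c2 i \<in> Y"
      "\<forall>i<j. d (g (c2 i)) (c2 (Suc i)) \<le> \<delta>"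
    using assms(2) unfolding is_chain_def by blast
  define w where "w i = (if i \<le> k then c1 i else c2 (i - k))" for i
  have "w i \<in> Y" if "i \<le> k + j" for i
    using that c1(3) c2(3) by (auto simp: w_def)
  moreover have "d (g (w i)) (w (Suc i)) \<le> \<delta>" if "i < k + j" for i
  proof (cases "i < k")
    case True
    then show ?thesis using c1(4) by (simp add: w_def)
  next
    case False
    then have "w i = c2 (i - k)" and "w (Suc i) = c2 (Suc (i - k))"
      using c1(2) c2(1) by (auto simp: w_def Suc_diff_le)
    then show ?thesis using c2(4) that False by simp
  qed
  ultimately show ?thesis
    unfolding is_chain_def using \<open>0 < k\<close> c1(1) c2(2) \<open>0 < j\<close>
    by (intro conjI exI[of _ w]) (auto simp: w_def)
qed

lemma is_chain_mono: "is_chain d Y g \<delta> k a b \<Longrightarrow> \<delta> \<le> \<delta>' \<Longrightarrow> is_chain d Y g \<delta>' k a b"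
  unfolding is_chain_def by (blast intro: order_trans)

lemma cycle_gcd_dvd:
  assumes "is_chain d Y g \<delta> k y y"
  shows "cycle_gcd d Y g \<delta> dvd k"
proof -
  have "y \<in> Y" using is_chain_in[OF assms] by simp
  with assms show ?thesis unfolding cycle_gcd_def by (intro Gcd_dvd) blast
qed

lemma cycle_gcd_antimono: "\<delta> \<le> \<delta>' \<Longrightarrow> cycle_gcd d Y g \<delta>' dvd cycle_gcd d Y g \<delta>"
  unfolding cycle_gcd_def
  by (intro Gcd_greatest Gcd_dvd) (auto intro: is_chain_mono)

lemma rel_delta_refl:
  "chain_transitive d Y g \<Longrightarrow> a \<in> Y \<Longrightarrow> \<delta> > 0 \<Longrightarrow> rel_delta d Y g \<delta> a a"
  unfolding chain_transitive_def rel_delta_def by (meson cycle_gcd_dvd)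

lemma rel_delta_sym:
  assumes "chain_transitive d Y g" and "\<delta> > 0" and "rel_delta d Y g \<delta> a b"
  shows "rel_delta d Y g \<delta> b a"
proof -
  obtain k where k: "cycle_gcd d Y g \<delta> dvd k" "is_chain d Y g \<delta> k a b"
    using assms(3) unfolding rel_delta_def by blast
  obtain j where j: "is_chain d Y g \<delta> j b a"
    using assms(1,2) is_chain_in[OF k(2)] unfolding chain_transitive_def by blast
  have "cycle_gcd d Y g \<delta> dvd k + j"
    by (rule cycle_gcd_dvd) (rule is_chain_append[OF k(2) j])
  with k(1) have "cycle_gcd d Y g \<delta> dvd j"
    by (simp add: dvd_add_right_iff)
  with j show ?thesis unfolding rel_delta_def by blast
qed

lemma rel_delta_trans:
  "rel_delta d Y g \<delta> a b \<Longrightarrow> rel_delta d Y g \<delta> b c \<Longrightarrow> rel_delta d Y g \<delta> a c"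
  unfolding rel_delta_def by (meson dvd_add is_chain_append)

lemma equiv_chain_rel: "chain_transitive d Y g \<Longrightarrow> equiv Y (chain_rel d Y g)"
  by (rule equivI)
    (auto simp: chain_rel_def refl_on_def sym_def trans_def
      intro: rel_delta_refl rel_delta_sym rel_delta_trans)

lemma in_quotient_eq_class: "equiv A r \<Longrightarrow> C \<in> A // r \<Longrightarrow> a \<in> C \<Longrightarrow> C = r `` {a}"
  by (erule quotientE) (metis Image_singleton_iff equiv_class_eq)

lemma is_chain_move_end:
  assumes chain: "is_chain dist Y g \<delta> k a y" and "l \<in> Y" and near: "dist y l \<le> \<epsilon>"
  shows "is_chain dist Y g (\<delta> + \<epsilon>) k a l"
proof -
  obtain c where "0 < k" and c: "c 0 = a" "c k = y" "\<forall>i\<le>k. c i \<in> Y"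
      "\<forall>i<k. dist (g (c i)) (c (Suc i)) \<le> \<delta>"
    using chain unfolding is_chain_def by blast
  have "dist (g (c i)) ((c(k := l)) (Suc i)) \<le> \<delta> + \<epsilon>" if "i < k" for i
  proof (cases "Suc i = k")
    case True
    have "dist (g (c i)) l \<le> dist (g (c i)) y + dist y l" by (rule dist_triangle)
    with True c(2,4) near that show ?thesis by force
  next
    case False
    have "dist (g (c i)) (c (Suc i)) \<le> \<delta>" using c(4) that by blast
    moreover have "0 \<le> \<epsilon>" using near zero_le_dist[of y l] by linarith
    ultimately show ?thesis using False by simp
  qed
  then show ?thesis
    unfolding is_chain_def using \<open>0 < k\<close> c \<open>l \<in> Y\<close>
    by (intro conjI exI[of _ "c(k := l)"]) auto
qed

lemma rel_delta_move_end:
  assumes "rel_delta dist Y g \<delta> a y" and "l \<in> Y" and "dist y l \<le> \<epsilon>"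
  shows "rel_delta dist Y g (\<delta> + \<epsilon>) a l"
proof -
  have "\<delta> \<le> \<delta> + \<epsilon>" using assms(3) zero_le_dist[of y l] by linarith
  then show ?thesis
    using assms is_chain_move_end unfolding rel_delta_def by (meson cycle_gcd_antimono dvd_trans)
qed

lemma closed_chain_rel_class:
  fixes g :: "'a::metric_space \<Rightarrow> 'a"
  assumes "closed Y"
  shows "closed (chain_rel dist Y g `` {a})"
  unfolding closed_sequential_limits
proof (intro allI impI, elim conjE)
  fix s l assume s: "\<forall>n. s n \<in> chain_rel dist Y g `` {a}" and lim: "s \<longlonglongrightarrow> l"
  then have "a \<in> Y" and "\<And>n. s n \<in> Y" by (auto simp: chain_rel_def)
  then have "l \<in> Y" using closed_sequentially[OF assms _ lim] by blast
  have "rel_delta dist Y g \<delta> a l" if "\<delta> > 0" for \<delta>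
  proof -
    obtain n where "dist (s n) l < \<delta>/2"
      using lim \<open>\<delta> > 0\<close> unfolding lim_sequentially by (meson half_gt_zero order_refl)
    moreover have "rel_delta dist Y g (\<delta>/2) a (s n)"
      using s \<open>\<delta> > 0\<close> by (auto simp: chain_rel_def)
    ultimately show ?thesis
      using rel_delta_move_end[of Y g "\<delta>/2" a "s n" l "\<delta>/2"] \<open>l \<in> Y\<close> by simp
  qed
  then show "l \<in> chain_rel dist Y g `` {a}"
    using \<open>a \<in> Y\<close> \<open>l \<in> Y\<close> by (auto simp: chain_rel_def)
qed

definition chain_simulation ::
  "('a \<Rightarrow> 'a \<Rightarrow> real) \<Rightarrow> 'a set \<Rightarrow> ('a \<Rightarrow> 'a) \<Rightarrow> real \<Rightarrow>
   ('b \<Rightarrow> 'b \<Rightarrow> real) \<Rightarrow> 'b set \<Rightarrow> ('b \<Rightarrow> 'b) \<Rightarrow> real \<Rightarrow> ('a \<Rightarrow> 'b \<Rightarrow> bool) \<Rightarrow> bool"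
where
  "chain_simulation dA YA gA \<epsilon>A dB YB gB \<epsilon>B P \<longleftrightarrow>
     (\<forall>a u. P a u \<longrightarrow> u \<in> YB) \<and> (\<forall>a\<in>YA. \<exists>u. P a u) \<and>
     (\<forall>a\<in>YA. \<forall>b\<in>YA. \<forall>u v. dA (gA a) b \<le> \<epsilon>A \<longrightarrow> P a u \<longrightarrow> P b v \<longrightarrow> dB (gB u) v \<le> \<epsilon>B)"

lemma is_chain_simulation:
  assumes sim: "chain_simulation dA YA gA \<epsilon>A dB YB gB \<epsilon>B P"
    and chain: "is_chain dA YA gA \<epsilon>A k a b" and "P a u" and "P b v"
  shows "is_chain dB YB gB \<epsilon>B k u v"
proof -
  obtain c where "0 < k" and c: "c 0 = a" "c k = b" "\<forall>i\<le>k. c i \<in> YA"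
      "\<forall>i<k. dA (gA (c i)) (c (Suc i)) \<le> \<epsilon>A"
    using chain unfolding is_chain_def by blast
  define w where "w i = (if i = 0 then u else if i = k then v else SOME u. P (c i) u)" for i
  have P_w: "P (c i) (w i)" if "i \<le> k" for i
  proof -
    have "\<exists>u. P (c i) u" using sim c(3) that unfolding chain_simulation_def by blast
    then show ?thesis using c \<open>P a u\<close> \<open>P b v\<close> by (auto simp: w_def intro: someI_ex)
  qed
  show ?thesis
    unfolding is_chain_def
  proof (intro conjI exI[of _ w])
    show "\<forall>i\<le>k. w i \<in> YB" using sim P_w unfolding chain_simulation_def by blast
    show "\<forall>i<k. dB (gB (w i)) (w (Suc i)) \<le> \<epsilon>B"
      using sim c(3,4) P_w unfolding chain_simulation_def by (meson Suc_leI less_imp_le)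
  qed (use \<open>0 < k\<close> in \<open>auto simp: w_def\<close>)
qed

lemma cycle_gcd_simulation:
  assumes "chain_simulation dA YA gA \<epsilon>A dB YB gB \<epsilon>B P"
  shows "cycle_gcd dB YB gB \<epsilon>B dvd cycle_gcd dA YA gA \<epsilon>A"
  unfolding cycle_gcd_def
proof (rule Gcd_greatest)
  fix k assume "k \<in> {k. \<exists>y\<in>YA. is_chain dA YA gA \<epsilon>A k y y}"
  then obtain y where "y \<in> YA" and cycle: "is_chain dA YA gA \<epsilon>A k y y" by blast
  then obtain u where "P y u" using assms unfolding chain_simulation_def by blast
  then have "is_chain dB YB gB \<epsilon>B k u u" using is_chain_simulation[OF assms cycle] by blast
  then show "Gcd {k. \<exists>y\<in>YB. is_chain dB YB gB \<epsilon>B k y y} dvd k"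
    by (rule cycle_gcd_dvd[unfolded cycle_gcd_def])
qed

lemma rel_delta_simulation:
  assumes "chain_simulation dA YA gA \<epsilon>A dB YB gB \<epsilon>B P"
    and "rel_delta dA YA gA \<epsilon>A a b" and "P a u" and "P b v"
  shows "rel_delta dB YB gB \<epsilon>B u v"
  using assms is_chain_simulation cycle_gcd_simulation unfolding rel_delta_def
  by (meson dvd_trans)

lemma chain_rel_image:
  assumes h: "h ` YA \<subseteq> YB" and gA: "gA ` YA \<subseteq> YA"
    and equivariant: "\<And>a. a \<in> YA \<Longrightarrow> h (gA a) = gB (h a)"
    and uniform: "\<And>\<epsilon>. \<epsilon> > 0 \<Longrightarrow> \<exists>\<delta>>0. \<forall>a\<in>YA. \<forall>b\<in>YA. dA a b < \<delta> \<longrightarrow> dB (h a) (h b) < \<epsilon>"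
    and ab: "(a, b) \<in> chain_rel dA YA gA"
  shows "(h a, h b) \<in> chain_rel dB YB gB"
proof -
  have "rel_delta dB YB gB \<epsilon> (h a) (h b)" if "\<epsilon> > 0" for \<epsilon>
  proof -
    obtain \<delta> where "\<delta> > 0" and \<delta>: "\<forall>a\<in>YA. \<forall>b\<in>YA. dA a b < \<delta> \<longrightarrow> dB (h a) (h b) < \<epsilon>"
      using uniform \<open>\<epsilon> > 0\<close> by blast
    have "chain_simulation dA YA gA (\<delta>/2) dB YB gB \<epsilon> (\<lambda>a u. a \<in> YA \<and> u = h a)"
      unfolding chain_simulation_def
    proof (intro conjI ballI allI impI)
      fix a b u v
      assume "a \<in> YA" "b \<in> YA" "dA (gA a) b \<le> \<delta>/2" "a \<in> YA \<and> u = h a" "b \<in> YA \<and> v = h b"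
      moreover have "gA a \<in> YA" using gA \<open>a \<in> YA\<close> by blast
      moreover have "dA (gA a) b < \<delta>" using \<open>dA (gA a) b \<le> \<delta>/2\<close> \<open>\<delta> > 0\<close> by linarith
      ultimately have "dB (h (gA a)) (h b) < \<epsilon>" using \<delta> by blast
      then show "dB (gB u) v \<le> \<epsilon>" using equivariant \<open>a \<in> YA \<and> u = h a\<close> \<open>b \<in> YA \<and> v = h b\<close> by simp
    qed (use h in auto)
    moreover have "rel_delta dA YA gA (\<delta>/2) a b"
      using ab \<open>\<delta> > 0\<close> by (simp add: chain_rel_def)
    moreover have "a \<in> YA" and "b \<in> YA" using ab by (simp_all add: chain_rel_def)
    ultimately show ?thesis by (simp add: rel_delta_simulation)
  qed
  moreover have "h a \<in> YB" and "h b \<in> YB" using ab h by (auto simp: chain_rel_def)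
  ultimately show ?thesis by (simp add: chain_rel_def)
qed

lemma invlim_dist_summable: "summable (\<lambda>n. (1/2::real) ^ n * min 1 (dist (x n) (y n)))"
  by (rule summable_comparison_test'[where g = "\<lambda>n. (1/2) ^ n" and N = 0])
    (auto simp: mult_left_le)

lemma invlim_dist_coord_le: "(1/2) ^ n * min 1 (dist (x n) (y n)) \<le> invlim_dist x y"
  using sum_le_suminf[OF invlim_dist_summable, of "{n}" x y] unfolding invlim_dist_def by simp

lemma invlim_dist_le:
  assumes "0 \<le> e" and near: "\<And>n. n \<le> N \<Longrightarrow> dist (x n) (y n) \<le> e"
  shows "invlim_dist x y \<le> 2 * e + (1/2) ^ N"
proof -
  define t where "t n = (1/2::real) ^ n * min 1 (dist (x n) (y n))" for n
  have "summable t" unfolding t_def by (rule invlim_dist_summable)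
  have "(\<Sum>n. t (n + Suc N)) \<le> (\<Sum>n. (1/2) ^ Suc N * (1/2) ^ n)"
  proof (rule suminf_le)
    show "t (n + Suc N) \<le> (1/2) ^ Suc N * (1/2) ^ n" for n
      by (simp add: t_def power_add mult_left_le)
  qed (use summable_ignore_initial_segment[OF \<open>summable t\<close>, of "Suc N"] in simp_all)
  also have "\<dots> = (1/2) ^ Suc N * (\<Sum>n. (1/2::real) ^ n)" by (rule suminf_mult) simp
  also have "\<dots> = (1/2) ^ N" by (simp add: suminf_geometric)
  finally have tail: "(\<Sum>n. t (n + Suc N)) \<le> (1/2) ^ N" .
  have "(\<Sum>i<Suc N. t i) \<le> (\<Sum>i<Suc N. (1/2) ^ i * e)"
    using near by (intro sum_mono) (auto simp: t_def less_Suc_eq_le intro!: mult_left_mono min.coboundedI2)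
  also have "\<dots> = (\<Sum>i<Suc N. (1/2::real) ^ i) * e" by (rule sum_distrib_right[symmetric])
  also have "\<dots> \<le> 2 * e"
    using sum_le_suminf[of "\<lambda>i. (1/2::real) ^ i" "{..<Suc N}"] \<open>0 \<le> e\<close>
    by (intro mult_right_mono) (auto simp: suminf_geometric)
  finally have "(\<Sum>i<Suc N. t i) \<le> 2 * e" .
  with tail show ?thesis
    using suminf_split_initial_segment[OF \<open>summable t\<close>, of "Suc N"]
    unfolding invlim_dist_def t_def by linarith
qed

text \<open>\<open>bond \<pi> n N\<close> is the composite bonding map \<open>\<pi>\<^sub>n\<^sup>N = \<pi> n \<circ> \<dots> \<circ> \<pi> (N - 1)\<close>
  for \<open>n \<le> N\<close>, and the identity for \<open>N \<le> n\<close>.\<close>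

primrec bond :: "(nat \<Rightarrow> 'a \<Rightarrow> 'a) \<Rightarrow> nat \<Rightarrow> nat \<Rightarrow> 'a \<Rightarrow> 'a" where
  "bond \<pi> n 0 x = x"
| "bond \<pi> n (Suc N) x = (if n \<le> N then bond \<pi> n N (\<pi> N x) else x)"

lemma bond_self [simp]: "bond \<pi> n n x = x"
  by (cases n) auto

lemma bond_Suc_left: "n < N \<Longrightarrow> bond \<pi> n N x = \<pi> n (bond \<pi> (Suc n) N x)"
  by (induction N arbitrary: x) (auto simp: less_Suc_eq)

lemma bond_mem:
  "(\<And>m. \<pi> m ` D (Suc m) \<subseteq> D m) \<Longrightarrow> x \<in> D N \<Longrightarrow> n \<le> N \<Longrightarrow> bond \<pi> n N x \<in> D n"
  by (induction N arbitrary: x) (auto simp: le_Suc_eq)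

lemma bond_invlim:
  assumes "x \<in> invlim X \<pi>"
  shows "n \<le> N \<Longrightarrow> bond \<pi> n N (x N) = x n"
proof (induction N)
  case (Suc N)
  show ?case
  proof (cases "n \<le> N")
    case True
    with Suc.IH assms show ?thesis by (simp add: invlim_def)
  next
    case False
    with Suc.prems have "n = Suc N" by simp
    then show ?thesis by simp
  qed
qed simp

lemma invlim_lift_surjective:
  assumes surj: "\<And>n. \<pi> n ` Y (Suc n) = Y n" and "y \<in> Y N"
  shows "\<exists>z\<in>invlim Y \<pi>. z N = y"
proof -
  define pre where "pre n v = (SOME w. w \<in> Y (Suc n) \<and> \<pi> n w = v)" for n v
  have pre: "pre n v \<in> Y (Suc n) \<and> \<pi> n (pre n v) = v" if "v \<in> Y n" for n v
    unfolding pre_def by (rule someI_ex) (use surj[of n] that in force)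
  define u where "u = rec_nat y (\<lambda>j. pre (N + j))"
  have u: "u j \<in> Y (N + j) \<and> \<pi> (N + j) (u (Suc j)) = u j" for j
  proof -
    have "u j \<in> Y (N + j)" by (induction j) (auto simp: u_def \<open>y \<in> Y N\<close> pre)
    then show ?thesis by (simp add: u_def pre)
  qed
  define z where "z n = (if N \<le> n then u (n - N) else bond \<pi> n N y)" for n
  have "z n \<in> Y n" for n
    using u[of "n - N"] bond_mem[of \<pi> Y y N n] surj \<open>y \<in> Y N\<close> by (auto simp: z_def)
  moreover have "\<pi> n (z (Suc n)) = z n" for n
  proof -
    consider "N \<le> n" | "Suc n = N" | "Suc n < N" by linarith
    then show ?thesis
    proof cases
      case 1
      then show ?thesis using u[of "n - N"] by (simp add: z_def Suc_diff_le)
    next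
      case 2
      from this[symmetric] show ?thesis by (simp add: z_def u_def)
    next
      case 3
      then show ?thesis by (simp add: z_def bond_Suc_left)
    qed
  qed
  ultimately show ?thesis by (intro bexI[of _ z]) (auto simp: invlim_def z_def u_def)
qed

lemma invlim_nonempty:
  fixes D :: "nat \<Rightarrow> 'a::metric_space set"
  assumes compact: "\<And>n. compact (D n)" and nonempty: "\<And>n. D n \<noteq> {}"
    and maps: "\<And>n. \<pi> n ` D (Suc n) \<subseteq> D n" and cont: "\<And>n. continuous_on (D (Suc n)) (\<pi> n)"
  shows "invlim D \<pi> \<noteq> {}"
proof -
  define z where "z N n = (if n \<le> N then bond \<pi> n N (SOME a. a \<in> D N) else SOME a. a \<in> D n)"
    for N n
  have some: "(SOME a. a \<in> D n) \<in> D n" for n using nonempty by (simp add: some_in_eq)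
  have zD: "z N n \<in> D n" for N n
    using bond_mem[of \<pi> D, OF maps some] some by (auto simp: z_def)
  have z_pi: "\<pi> n (z N (Suc n)) = z N n" if "n < N" for N n
    using that by (simp add: z_def bond_Suc_left)
  have "compact (Pi\<^sub>E UNIV D)"
    using compactin_PiE[of "\<lambda>_. euclidean" UNIV D] compact by (simp add: euclidean_product_topology)
  moreover have "\<forall>N. z N \<in> Pi\<^sub>E UNIV D" using zD by (simp add: PiE_iff)
  ultimately obtain l \<sigma> where l: "l \<in> Pi\<^sub>E UNIV D" and "strict_mono \<sigma>" and "(z \<circ> \<sigma>) \<longlonglongrightarrow> l"
    by (meson compact_imp_seq_compact seq_compactE)
  then have lim: "(\<lambda>j. z (\<sigma> j) n) \<longlonglongrightarrow> l n" for n
    using continuous_on_tendsto_compose[OF continuous_on_product_coordinates] by (simp add: o_def)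
  have "\<pi> n (l (Suc n)) = l n" for n
  proof (rule LIMSEQ_unique[OF _ lim])
    have "(\<lambda>j. \<pi> n (z (\<sigma> j) (Suc n))) \<longlonglongrightarrow> \<pi> n (l (Suc n))"
      using zD l by (intro continuous_on_tendsto_compose[OF cont lim]) (auto simp: PiE_iff)
    moreover have "\<forall>\<^sub>F j in sequentially. \<pi> n (z (\<sigma> j) (Suc n)) = z (\<sigma> j) n"
      using eventually_gt_at_top[of n]
      by (rule eventually_mono) (meson order_less_le_trans seq_suble[OF \<open>strict_mono \<sigma>\<close>] z_pi)
    ultimately show "(\<lambda>j. z (\<sigma> j) n) \<longlonglongrightarrow> \<pi> n (l (Suc n))"
      by (rule Lim_transform_eventually)
  qed
  then have "l \<in> invlim D \<pi>" using l by (auto simp: invlim_def)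
  then show ?thesis by blast
qed

locale compact_inverse_sequence =
  fixes X :: "nat \<Rightarrow> 'a::metric_space set"
    and \<pi> :: "nat \<Rightarrow> 'a \<Rightarrow> 'a"
  assumes compact: "\<And>n. compact (X n)"
    and pi_cont: "\<And>n. continuous_on (X (Suc n)) (\<pi> n)"
    and pi_maps: "\<And>n. \<pi> n ` X (Suc n) \<subseteq> X n"
begin

lemma pi_uniformly_continuous:
  "\<epsilon> > 0 \<Longrightarrow> \<exists>\<delta>>0. \<forall>a\<in>X (Suc n). \<forall>b\<in>X (Suc n). dist a b < \<delta> \<longrightarrow> dist (\<pi> n a) (\<pi> n b) < \<epsilon>"
  using compact_uniformly_continuous[OF pi_cont compact] unfolding uniformly_continuous_on_def
  by (metis dist_commute)

lemma bond_uniformly_continuous: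
  "\<epsilon> > 0 \<Longrightarrow> \<exists>\<eta>>0. \<forall>a\<in>X N. \<forall>b\<in>X N. dist a b < \<eta> \<longrightarrow>
      (\<forall>n\<le>N. dist (bond \<pi> n N a) (bond \<pi> n N b) < \<epsilon>)"
proof (induction N)
  case 0
  then show ?case by auto
next
  case (Suc N)
  then obtain \<eta> where "\<eta> > 0" and \<eta>: "\<forall>a\<in>X N. \<forall>b\<in>X N. dist a b < \<eta> \<longrightarrow>
      (\<forall>n\<le>N. dist (bond \<pi> n N a) (bond \<pi> n N b) < \<epsilon>)" by blast
  obtain \<eta>' where "\<eta>' > 0" and \<eta>': "\<forall>a\<in>X (Suc N). \<forall>b\<in>X (Suc N). dist a b < \<eta>' \<longrightarrow>
      dist (\<pi> N a) (\<pi> N b) < \<eta>"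
    using pi_uniformly_continuous[OF \<open>\<eta> > 0\<close>] by blast
  have "\<forall>a\<in>X (Suc N). \<forall>b\<in>X (Suc N). dist a b < min \<epsilon> \<eta>' \<longrightarrow>
      (\<forall>n\<le>Suc N. dist (bond \<pi> n (Suc N) a) (bond \<pi> n (Suc N) b) < \<epsilon>)"
    using \<eta> \<eta>' pi_maps[of N] by (auto simp: le_Suc_eq image_subset_iff)
  moreover have "min \<epsilon> \<eta>' > 0" using Suc.prems \<open>\<eta>' > 0\<close> by simp
  ultimately show ?case by blast
qed

lemma invlim_dist_controlled_by_coord:
  assumes "\<delta> > 0"
  shows "\<exists>N. \<exists>\<eta>>0. \<forall>z\<in>invlim X \<pi>. \<forall>z'\<in>invlim X \<pi>. dist (z N) (z' N) < \<eta> \<longrightarrow> invlim_dist z z' \<le> \<delta>"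
proof -
  obtain N where N: "(1/2::real) ^ N < \<delta>/2"
    using real_arch_pow_inv[of "\<delta>/2" "1/2::real"] \<open>\<delta> > 0\<close> by auto
  obtain \<eta> where "\<eta> > 0" and \<eta>: "\<forall>a\<in>X N. \<forall>b\<in>X N. dist a b < \<eta> \<longrightarrow>
      (\<forall>n\<le>N. dist (bond \<pi> n N a) (bond \<pi> n N b) < \<delta>/4)"
    using bond_uniformly_continuous[of "\<delta>/4" N] \<open>\<delta> > 0\<close> by auto
  have "invlim_dist z z' \<le> \<delta>"
    if "z \<in> invlim X \<pi>" "z' \<in> invlim X \<pi>" "dist (z N) (z' N) < \<eta>" for z z'
  proof -
    have "dist (z n) (z' n) \<le> \<delta>/4" if "n \<le> N" for n
      using \<eta> \<open>n \<le> N\<close> \<open>dist (z N) (z' N) < \<eta>\<close> bond_invlim[OF \<open>z \<in> invlim X \<pi>\<close>]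
        bond_invlim[OF \<open>z' \<in> invlim X \<pi>\<close>] \<open>z \<in> invlim X \<pi>\<close> \<open>z' \<in> invlim X \<pi>\<close>
      by (force simp: invlim_def)
    then have "invlim_dist z z' \<le> 2 * (\<delta>/4) + (1/2) ^ N"
      using \<open>\<delta> > 0\<close> by (intro invlim_dist_le) auto
    with N show ?thesis by linarith
  qed
  with \<open>\<eta> > 0\<close> show ?thesis by blast
qed

text \<open>MLC(1) says exactly that the images \<open>\<pi> n ` X (Suc n)\<close> form a surjective inverse
  sequence.\<close>

lemma invlim_lift:
  assumes "MLC1 X \<pi>" and "c \<in> X (Suc N)"
  shows "\<exists>z\<in>invlim X \<pi>. z N = \<pi> N c"
proof -
  define Y where "Y n = \<pi> n ` X (Suc n)" for n
  have "\<pi> n ` Y (Suc n) = Y n" for n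
    using \<open>MLC1 X \<pi>\<close> unfolding MLC1_def Y_def by (metis image_image)
  then obtain z where "z \<in> invlim Y \<pi>" and "z N = \<pi> N c"
    using invlim_lift_surjective[of \<pi> Y "\<pi> N c" N] \<open>c \<in> X (Suc N)\<close> by (auto simp: Y_def)
  moreover have "invlim Y \<pi> \<subseteq> invlim X \<pi>"
    using pi_maps by (fastforce simp: invlim_def Y_def)
  ultimately show ?thesis by blast
qed

end

locale equivariant_inverse_sequence = compact_inverse_sequence X \<pi>
  for X :: "nat \<Rightarrow> 'a::metric_space set" and \<pi> :: "nat \<Rightarrow> 'a \<Rightarrow> 'a" +
  fixes f :: "nat \<Rightarrow> 'a \<Rightarrow> 'a"
  assumes f_maps: "\<And>n. f n ` X n \<subseteq> X n"
    and equivariant: "\<And>n x. x \<in> X (Suc n) \<Longrightarrow> f n (\<pi> n x) = \<pi> n (f (Suc n) x)"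
begin

lemma limmap_invlim:
  assumes "x \<in> invlim X \<pi>"
  shows "limmap f x \<in> invlim X \<pi>"
proof -
  have "x n \<in> X n" and "\<pi> n (x (Suc n)) = x n" for n using assms by (auto simp: invlim_def)
  then have "f n (x n) \<in> X n" and "\<pi> n (f (Suc n) (x (Suc n))) = f n (x n)" for n
    using f_maps equivariant by (blast, metis)
  then show ?thesis by (simp add: invlim_def limmap_def)
qed

lemma chain_rel_pi:
  "(a, b) \<in> chain_rel dist (X (Suc n)) (f (Suc n)) \<Longrightarrow> (\<pi> n a, \<pi> n b) \<in> chain_rel dist (X n) (f n)"
  by (rule chain_rel_image[OF pi_maps f_maps _ pi_uniformly_continuous]) (use equivariant in auto)

lemma chain_rel_invlim_coord:
  assumes "(x, y) \<in> chain_rel invlim_dist (invlim X \<pi>) (limmap f)"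
  shows "(x n, y n) \<in> chain_rel dist (X n) (f n)"
proof (rule chain_rel_image[where h = "\<lambda>x. x n", OF _ _ _ _ assms])
  fix \<epsilon> :: real assume "\<epsilon> > 0"
  have "dist (a n) (b n) < \<epsilon>" if "invlim_dist a b < (1/2) ^ n * min \<epsilon> 1" for a b :: "nat \<Rightarrow> 'a"
  proof -
    have "(1/2) ^ n * min 1 (dist (a n) (b n)) < (1/2) ^ n * min \<epsilon> 1"
      using invlim_dist_coord_le[of n a b] that by linarith
    then show ?thesis by (simp add: mult_less_cancel_left_pos min_less_iff_disj) linarith
  qed
  moreover have "(1/2::real) ^ n * min \<epsilon> 1 > 0" using \<open>\<epsilon> > 0\<close> by simp
  ultimately show "\<exists>\<delta>>0. \<forall>a\<in>invlim X \<pi>. \<forall>b\<in>invlim X \<pi>. invlim_dist a b < \<delta> \<longrightarrow> dist (a n) (b n) < \<epsilon>"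
    by blast
qed (fastforce simp: invlim_def, use limmap_invlim in blast, simp add: limmap_def)

lemma chain_rel_invlimI:
  assumes "MLC1 X \<pi>" and x: "x \<in> invlim X \<pi>" and y: "y \<in> invlim X \<pi>"
    and coords: "\<And>n. (x n, y n) \<in> chain_rel dist (X n) (f n)"
  shows "(x, y) \<in> chain_rel invlim_dist (invlim X \<pi>) (limmap f)"
proof -
  have "rel_delta invlim_dist (invlim X \<pi>) (limmap f) \<delta> x y" if "\<delta> > 0" for \<delta>
  proof -
    obtain N \<eta> where "\<eta> > 0" and \<eta>: "\<forall>z\<in>invlim X \<pi>. \<forall>z'\<in>invlim X \<pi>.
        dist (z N) (z' N) < \<eta> \<longrightarrow> invlim_dist z z' \<le> \<delta>"
      using invlim_dist_controlled_by_coord[OF \<open>\<delta> > 0\<close>] by blast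
    obtain \<eta>' where "\<eta>' > 0" and \<eta>': "\<forall>a\<in>X (Suc N). \<forall>b\<in>X (Suc N). dist a b < \<eta>' \<longrightarrow>
        dist (\<pi> N a) (\<pi> N b) < \<eta>"
      using pi_uniformly_continuous[OF \<open>\<eta> > 0\<close>] by blast
    txt \<open>Only \<open>\<pi> N c\<close>, not \<open>c\<close> itself, can be lifted to the limit (MLC(1)), but
      closeness at coordinate \<open>N\<close> is all the estimate needs.\<close>
    let ?P = "\<lambda>c z. z \<in> invlim X \<pi> \<and> z N = \<pi> N c"
    have "chain_simulation dist (X (Suc N)) (f (Suc N)) (\<eta>'/2) invlim_dist (invlim X \<pi>) (limmap f) \<delta> ?P"
      unfolding chain_simulation_def
    proof (intro conjI ballI allI impI)
      fix a b z z'
      assume "a \<in> X (Suc N)" "b \<in> X (Suc N)" "dist (f (Suc N) a) b \<le> \<eta>'/2" "?P a z" "?P b z'"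
      moreover have "f (Suc N) a \<in> X (Suc N)" using f_maps \<open>a \<in> X (Suc N)\<close> by blast
      ultimately have "dist (limmap f z N) (z' N) < \<eta>"
        using \<eta>' \<open>\<eta>' > 0\<close> equivariant by (simp add: limmap_def)
      then show "invlim_dist (limmap f z) z' \<le> \<delta>"
        using \<eta> limmap_invlim \<open>?P a z\<close> \<open>?P b z'\<close> by blast
    qed (use invlim_lift[OF \<open>MLC1 X \<pi>\<close>] in auto)
    moreover have "rel_delta dist (X (Suc N)) (f (Suc N)) (\<eta>'/2) (x (Suc N)) (y (Suc N))"
      using coords[of "Suc N"] \<open>\<eta>' > 0\<close> by (simp add: chain_rel_def)
    ultimately show ?thesis
      by (rule rel_delta_simulation) (use x y in \<open>auto simp: invlim_def\<close>)
  qed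
  with x y show ?thesis by (simp add: chain_rel_def)
qed

lemma chain_class_invlim:
  assumes "MLC1 X \<pi>" and "x \<in> invlim X \<pi>"
  shows "chain_rel invlim_dist (invlim X \<pi>) (limmap f) `` {x}
    = bracket X \<pi> (\<lambda>n. chain_rel dist (X n) (f n) `` {x n})"
proof (intro set_eqI iffI)
  fix y assume "y \<in> chain_rel invlim_dist (invlim X \<pi>) (limmap f) `` {x}"
  then have xy: "(x, y) \<in> chain_rel invlim_dist (invlim X \<pi>) (limmap f)" by simp
  then have "y \<in> invlim X \<pi>" by (simp add: chain_rel_def)
  with chain_rel_invlim_coord[OF xy]
  show "y \<in> bracket X \<pi> (\<lambda>n. chain_rel dist (X n) (f n) `` {x n})" by (simp add: bracket_def)
next
  fix y assume "y \<in> bracket X \<pi> (\<lambda>n. chain_rel dist (X n) (f n) `` {x n})"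
  then have "y \<in> invlim X \<pi>" and "\<And>n. (x n, y n) \<in> chain_rel dist (X n) (f n)"
    by (simp_all add: bracket_def)
  with chain_rel_invlimI[OF assms] show "y \<in> chain_rel invlim_dist (invlim X \<pi>) (limmap f) `` {x}"
    by simp
qed

lemma Dcl_invlim_subset:
  assumes "MLC1 X \<pi>"
  shows "Dcl invlim_dist (invlim X \<pi>) (limmap f) \<subseteq> bracket X \<pi> ` Dpi X f \<pi>"
proof
  fix A assume "A \<in> Dcl invlim_dist (invlim X \<pi>) (limmap f)"
  then obtain x where A: "A = chain_rel invlim_dist (invlim X \<pi>) (limmap f) `` {x}"
    and x: "x \<in> invlim X \<pi>"
    unfolding Dcl_def by (rule quotientE)
  define D where "D n = chain_rel dist (X n) (f n) `` {x n}" for n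
  have "D n \<in> Dcl dist (X n) (f n)" for n
    using x unfolding D_def Dcl_def invlim_def by (blast intro: quotientI)
  moreover have "\<pi> n ` D (Suc n) \<subseteq> D n" for n
    using chain_rel_pi x by (fastforce simp: D_def invlim_def)
  ultimately have "D \<in> Dpi X f \<pi>" by (simp add: Dpi_def)
  moreover have "A = bracket X \<pi> D"
    using chain_class_invlim[OF assms x] by (simp add: A D_def[abs_def])
  ultimately show "A \<in> bracket X \<pi> ` Dpi X f \<pi>" by blast
qed

lemma bracket_Dpi_subset:
  assumes ct: "\<And>n. chain_transitive dist (X n) (f n)" and "MLC1 X \<pi>"
  shows "bracket X \<pi> ` Dpi X f \<pi> \<subseteq> Dcl invlim_dist (invlim X \<pi>) (limmap f)"
proof
  fix A assume "A \<in> bracket X \<pi> ` Dpi X f \<pi>"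
  then obtain D where "D \<in> Dpi X f \<pi>" and A: "A = bracket X \<pi> D" by blast
  then have D: "D n \<in> X n // chain_rel dist (X n) (f n)" and D_pi: "\<pi> n ` D (Suc n) \<subseteq> D n" for n
    by (auto simp: Dpi_def Dcl_def)
  have equiv: "equiv (X n) (chain_rel dist (X n) (f n))" for n
    using ct by (rule equiv_chain_rel)
  have D_X: "D n \<subseteq> X n" for n
    using in_quotient_imp_subset[OF equiv D] .
  have "compact (D n)" for n
  proof -
    obtain a where "D n = chain_rel dist (X n) (f n) `` {a}" using D by (rule quotientE)
    then have "closed (D n)" by (simp add: closed_chain_rel_class compact_imp_closed[OF compact])
    then show ?thesis using compact_Int_closed[OF compact] D_X by (metis inf.absorb2)
  qed
  moreover have "D n \<noteq> {}" for n using in_quotient_imp_non_empty[OF equiv D] .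
  moreover have "continuous_on (D (Suc n)) (\<pi> n)" for n using continuous_on_subset[OF pi_cont D_X] .
  ultimately obtain x where x: "x \<in> invlim D \<pi>"
    using invlim_nonempty[of D \<pi>] D_pi by blast
  then have "x \<in> invlim X \<pi>" using D_X by (fastforce simp: invlim_def)
  have "D = (\<lambda>n. chain_rel dist (X n) (f n) `` {x n})"
    using in_quotient_eq_class[OF equiv D] x by (simp add: invlim_def fun_eq_iff)
  then have "A = chain_rel invlim_dist (invlim X \<pi>) (limmap f) `` {x}"
    using chain_class_invlim[OF \<open>MLC1 X \<pi>\<close> \<open>x \<in> invlim X \<pi>\<close>] A by simp
  then show "A \<in> Dcl invlim_dist (invlim X \<pi>) (limmap f)"
    unfolding Dcl_def using quotientI[OF \<open>x \<in> invlim X \<pi>\<close>] by simp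
qed

end

theorem lemma3p3:
  fixes X :: "nat \<Rightarrow> 'a::metric_space set"
    and f :: "nat \<Rightarrow> 'a \<Rightarrow> 'a"
    and \<pi> :: "nat \<Rightarrow> 'a \<Rightarrow> 'a"
  assumes compact: "\<And>n. compact (X n)"
    and f_cont: "\<And>n. continuous_on (X n) (f n)"
    and f_maps: "\<And>n. f n ` X n \<subseteq> X n"
    and pi_cont: "\<And>n. continuous_on (X (Suc n)) (\<pi> n)"
    and pi_maps: "\<And>n. \<pi> n ` X (Suc n) \<subseteq> X n"
    and equivariant: "\<And>n x. x \<in> X (Suc n) \<Longrightarrow> f n (\<pi> n x) = \<pi> n (f (Suc n) x)"
    and ct: "\<And>n. chain_transitive dist (X n) (f n)"
    and mlc: "MLC1 X \<pi>"
  shows "Dcl invlim_dist (invlim X \<pi>) (limmap f) = bracket X \<pi> ` Dpi X f \<pi>"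
proof -
  interpret equivariant_inverse_sequence X \<pi> f
    using compact pi_cont pi_maps f_maps equivariant by unfold_locales
  show ?thesis
    using Dcl_invlim_subset[OF mlc] bracket_Dpi_subset[OF ct mlc] by (rule subset_antisym)
qed

end
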